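(* Let $P$ and $Q$ be diassociative loops and let $f:P\to Q$ be a half-isomorphism. Then $f(C(P))=C(Q)$, where $C(L)=\{c\in L: cx=xc \text{ for all } x\in L\}$ denotes the commutant of a loop $L$.
   Context: A loop is diassociative if any two of its elements generate a group. For loops $(L,\ast)$ and $(L',\cdot)$, a bijection $f:L\to L'$ is a half-isomorphism if $f(x\ast y)\in\{f(x)\cdot f(y),\,f(y)\cdot f(x)\}$ for all $x,y\in L$. *)

theory Defs
  imports Main
begin

definition loop :: "'a set \<Rightarrow> ('a \<Rightarrow> 'a \<Rightarrow> 'a) \<Rightarrow> bool" where
  "loop L m \<longleftrightarrow>
     (\<forall>x\<in>L. \<forall>y\<in>L. m x y \<in> L) \<and>
     (\<forall>a\<in>L. \<forall>b\<in>L. \<exists>!x. x \<in> L \<and> m a x = b) \<and>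
     (\<forall>a\<in>L. \<forall>b\<in>L. \<exists>!y. y \<in> L \<and> m y a = b) \<and>
     (\<exists>e\<in>L. \<forall>x\<in>L. m e x = x \<and> m x e = x)"

definition ldiv :: "'a set \<Rightarrow> ('a \<Rightarrow> 'a \<Rightarrow> 'a) \<Rightarrow> 'a \<Rightarrow> 'a \<Rightarrow> 'a" where
  "ldiv L m a b = (THE x. x \<in> L \<and> m a x = b)"

definition rdiv :: "'a set \<Rightarrow> ('a \<Rightarrow> 'a \<Rightarrow> 'a) \<Rightarrow> 'a \<Rightarrow> 'a \<Rightarrow> 'a" where
  "rdiv L m b a = (THE y. y \<in> L \<and> m y a = b)"

definition subloop_closed :: "'a set \<Rightarrow> ('a \<Rightarrow> 'a \<Rightarrow> 'a) \<Rightarrow> 'a set \<Rightarrow> bool" where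
  "subloop_closed L m S \<longleftrightarrow> S \<subseteq> L \<and>
     (\<forall>x\<in>S. \<forall>y\<in>S. m x y \<in> S \<and> ldiv L m x y \<in> S \<and> rdiv L m x y \<in> S)"

definition subloop_gen :: "'a set \<Rightarrow> ('a \<Rightarrow> 'a \<Rightarrow> 'a) \<Rightarrow> 'a set \<Rightarrow> 'a set" where
  "subloop_gen L m X = \<Inter>{S. subloop_closed L m S \<and> X \<subseteq> S}"

text \<open>Diassociative: any two elements generate a group, i.e. the subloop they
  generate is associative (an associative loop is a group).\<close>
definition diassociative :: "'a set \<Rightarrow> ('a \<Rightarrow> 'a \<Rightarrow> 'a) \<Rightarrow> bool" where
  "diassociative L m \<longleftrightarrow> loop L m \<and>
     (\<forall>x\<in>L. \<forall>y\<in>L. \<forall>a\<in>subloop_gen L m {x, y}. \<forall>b\<in>subloop_gen L m {x, y}.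
        \<forall>c\<in>subloop_gen L m {x, y}. m (m a b) c = m a (m b c))"

definition half_isomorphism ::
  "'a set \<Rightarrow> ('a \<Rightarrow> 'a \<Rightarrow> 'a) \<Rightarrow> 'b set \<Rightarrow> ('b \<Rightarrow> 'b \<Rightarrow> 'b) \<Rightarrow> ('a \<Rightarrow> 'b) \<Rightarrow> bool" where
  "half_isomorphism L m L' n f \<longleftrightarrow> bij_betw f L L' \<and>
     (\<forall>x\<in>L. \<forall>y\<in>L. f (m x y) \<in> {n (f x) (f y), n (f y) (f x)})"

definition commutant :: "'a set \<Rightarrow> ('a \<Rightarrow> 'a \<Rightarrow> 'a) \<Rightarrow> 'a set" where
  "commutant L m = {c \<in> L. \<forall>x\<in>L. m c x = m x c}"

end

theory Submission
  imports Defs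
begin

text \<open>The backward inclusion needs only injectivity: if f c commutes with every element
  of Q, then f (c x) and f (x c) both equal f c f x. For the forward inclusion it suffices
  that f maps commuting pairs to commuting pairs. Let x y = y x in P, write a = f x, b = f y,
  and assume (after swapping x and y) f (x y) = a b while a b \<noteq> b a. With u = x y,
  diassociativity of P gives u y = x (y y) and u u = x (u y). In the group generated by a
  and b the element f (u y), which lies in both {(a b) b, b (a b)} and {a (b b), (b b) a},
  must be a b b; then f (u u) = (a b)(a b) would have to equal a (a b b) or (a b b) a,
  and cancellation turns either equation into a b = b a.\<close>

lemma loop_mult_closed:
  assumes "loop L m" "x \<in> L" "y \<in> L"
  shows "m x y \<in> L"
  using assms(1)[unfolded loop_def, THEN conjunct1] assms(2,3) by blast

lemma loop_left_solve_ex1: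
  assumes "loop L m" "a \<in> L" "b \<in> L"
  shows "\<exists>!x. x \<in> L \<and> m a x = b"
  using assms(1)[unfolded loop_def, THEN conjunct2, THEN conjunct1] assms(2,3) by simp

lemma loop_right_solve_ex1:
  assumes "loop L m" "a \<in> L" "b \<in> L"
  shows "\<exists>!y. y \<in> L \<and> m y a = b"
  using assms(1)[unfolded loop_def, THEN conjunct2, THEN conjunct2, THEN conjunct1] assms(2,3)
  by simp

lemma loop_left_cancel:
  assumes "loop L m" "p \<in> L" "q \<in> L" "r \<in> L" "m p q = m p r"
  shows "q = r"
  using loop_left_solve_ex1[OF assms(1,2) loop_mult_closed[OF assms(1-3)]] assms(3-5) by metis

lemma loop_right_cancel:
  assumes "loop L m" "p \<in> L" "q \<in> L" "r \<in> L" "m q p = m r p"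
  shows "q = r"
  using loop_right_solve_ex1[OF assms(1,2) loop_mult_closed[OF assms(1,3,2)]] assms(3-5) by metis

lemma loop_ldiv_closed:
  assumes "loop L m" "a \<in> L" "b \<in> L"
  shows "ldiv L m a b \<in> L"
  unfolding ldiv_def using theI'[OF loop_left_solve_ex1[OF assms]] by (rule conjunct1)

lemma loop_rdiv_closed:
  assumes "loop L m" "a \<in> L" "b \<in> L"
  shows "rdiv L m b a \<in> L"
  unfolding rdiv_def using theI'[OF loop_right_solve_ex1[OF assms]] by (rule conjunct1)

lemma loop_subloop_closed_carrier: "loop L m \<Longrightarrow> subloop_closed L m L"
  unfolding subloop_closed_def by (simp add: loop_mult_closed loop_ldiv_closed loop_rdiv_closed)

lemma subloop_gen_superset: "X \<subseteq> subloop_gen L m X"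
  unfolding subloop_gen_def by blast

lemma subloop_gen_mult_closed:
  assumes "a \<in> subloop_gen L m X" "b \<in> subloop_gen L m X"
  shows "m a b \<in> subloop_gen L m X"
  unfolding subloop_gen_def
proof (rule InterI)
  fix S assume "S \<in> {S. subloop_closed L m S \<and> X \<subseteq> S}"
  moreover from this have "a \<in> S" "b \<in> S"
    using assms unfolding subloop_gen_def by blast+
  ultimately show "m a b \<in> S" unfolding subloop_closed_def by blast
qed

lemma subloop_gen_subset_carrier:
  "loop L m \<Longrightarrow> X \<subseteq> L \<Longrightarrow> subloop_gen L m X \<subseteq> L"
  unfolding subloop_gen_def using loop_subloop_closed_carrier by blast

lemma diassociative_imp_loop: "diassociative L m \<Longrightarrow> loop L m"
  unfolding diassociative_def by blast

lemma diassociative_assoc: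
  assumes "diassociative L m" "x \<in> L" "y \<in> L"
    and "p \<in> subloop_gen L m {x, y}" "q \<in> subloop_gen L m {x, y}" "r \<in> subloop_gen L m {x, y}"
  shows "m (m p q) r = m p (m q r)"
  using assms unfolding diassociative_def by blast

lemma diassociative_noncommuting_products:
  assumes dias: "diassociative L m" and "a \<in> L" "b \<in> L" and ne: "m a b \<noteq> m b a"
  shows "m b (m a b) \<noteq> m a (m b b)" and "m b (m a b) \<noteq> m (m b b) a"
    and "m (m a b) (m a b) \<noteq> m a (m (m a b) b)"
    and "m (m a b) (m a b) \<noteq> m (m (m a b) b) a"
proof -
  define H where "H = subloop_gen L m {a, b}"
  have loop: "loop L m" using dias by (rule diassociative_imp_loop)
  have "{a, b} \<subseteq> H" unfolding H_def by (rule subloop_gen_superset)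
  then have gens: "a \<in> H" "b \<in> H" by simp_all
  have mult: "\<And>p q. p \<in> H \<Longrightarrow> q \<in> H \<Longrightarrow> m p q \<in> H"
    unfolding H_def by (rule subloop_gen_mult_closed)
  have "H \<subseteq> L"
    unfolding H_def by (rule subloop_gen_subset_carrier[OF loop]) (simp add: assms(2,3))
  then have carrier: "\<And>p. p \<in> H \<Longrightarrow> p \<in> L" by (rule subsetD)
  have lcancel: "\<And>p q r. p \<in> H \<Longrightarrow> q \<in> H \<Longrightarrow> r \<in> H \<Longrightarrow> m p q = m p r \<Longrightarrow> q = r"
    by (rule loop_left_cancel[OF loop carrier carrier carrier])
  have rcancel: "\<And>p q r. p \<in> H \<Longrightarrow> q \<in> H \<Longrightarrow> r \<in> H \<Longrightarrow> m q p = m r p \<Longrightarrow> q = r"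
    by (rule loop_right_cancel[OF loop carrier carrier carrier])
  have assoc: "\<And>p q r. p \<in> H \<Longrightarrow> q \<in> H \<Longrightarrow> r \<in> H \<Longrightarrow> m (m p q) r = m p (m q r)"
    unfolding H_def by (rule diassociative_assoc[OF dias assms(2,3)])
  have ab: "m a b \<in> H" "m b a \<in> H" and abb: "m (m a b) b \<in> H"
    by (simp_all add: mult gens)
  have bab: "m b (m a b) \<noteq> m (m a b) b"
  proof
    assume "m b (m a b) = m (m a b) b"
    then have "m (m b a) b = m (m a b) b" by (simp add: assoc gens)
    then show False using rcancel[OF gens(2) ab(2,1)] ne by simp
  qed
  then show "m b (m a b) \<noteq> m a (m b b)" by (simp add: assoc gens)
  show "m b (m a b) \<noteq> m (m b b) a"
  proof
    assume "m b (m a b) = m (m b b) a"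
    then have "m b (m a b) = m b (m b a)" by (simp add: assoc gens)
    then show False using lcancel[OF gens(2) ab] ne by simp
  qed
  show "m (m a b) (m a b) \<noteq> m a (m (m a b) b)"
  proof
    assume "m (m a b) (m a b) = m a (m (m a b) b)"
    then have "m a (m b (m a b)) = m a (m (m a b) b)" by (simp add: assoc gens ab)
    then show False using lcancel[OF gens(1) mult[OF gens(2) ab(1)] abb] bab by simp
  qed
  show "m (m a b) (m a b) \<noteq> m (m (m a b) b) a"
  proof
    assume "m (m a b) (m a b) = m (m (m a b) b) a"
    then have "m (m a b) (m a b) = m (m a b) (m b a)" using assoc[OF ab(1) gens(2,1)] by simp
    then show False using lcancel[OF ab(1) ab] ne by simp
  qed
qed

lemma diassociative_commuting_products:
  assumes dias: "diassociative L m" and "x \<in> L" "y \<in> L" and comm: "m x y = m y x"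
  shows "m (m x y) y = m x (m y y)" and "m (m x y) (m x y) = m x (m (m x y) y)"
proof -
  define G where "G = subloop_gen L m {x, y}"
  have "{x, y} \<subseteq> G" unfolding G_def by (rule subloop_gen_superset)
  then have gens: "x \<in> G" "y \<in> G" by simp_all
  have xy: "m x y \<in> G" unfolding G_def using gens[unfolded G_def] by (rule subloop_gen_mult_closed)
  have assoc: "\<And>p q r. p \<in> G \<Longrightarrow> q \<in> G \<Longrightarrow> r \<in> G \<Longrightarrow> m (m p q) r = m p (m q r)"
    unfolding G_def by (rule diassociative_assoc[OF dias assms(2,3)])
  show "m (m x y) y = m x (m y y)" by (rule assoc[OF gens(1,2,2)])
  have "m (m x y) (m x y) = m x (m y (m x y))" by (rule assoc[OF gens xy])
  also have "m y (m x y) = m (m x y) y"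
    using assoc[OF gens(2,1,2)] comm by simp
  finally show "m (m x y) (m x y) = m x (m (m x y) y)" .
qed

lemma half_isomorphism_bij: "half_isomorphism P mP Q mQ f \<Longrightarrow> bij_betw f P Q"
  unfolding half_isomorphism_def by (rule conjunct1)

lemma half_isomorphism_mult:
  assumes "half_isomorphism P mP Q mQ f" "x \<in> P" "y \<in> P"
  shows "f (mP x y) = mQ (f x) (f y) \<or> f (mP x y) = mQ (f y) (f x)"
  using assms(1)[unfolded half_isomorphism_def, THEN conjunct2] assms(2,3) by simp

lemma half_isomorphism_mult_self:
  "half_isomorphism P mP Q mQ f \<Longrightarrow> x \<in> P \<Longrightarrow> f (mP x x) = mQ (f x) (f x)"
  using half_isomorphism_mult by fastforce

lemma half_isomorphism_commuting_pair:
  assumes dP: "diassociative P mP" and dQ: "diassociative Q mQ"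
    and h: "half_isomorphism P mP Q mQ f"
    and "x \<in> P" "y \<in> P" and comm: "mP x y = mP y x"
  shows "mQ (f x) (f y) = mQ (f y) (f x)"
proof -
  have loopP: "loop P mP" using dP by (rule diassociative_imp_loop)
  have fQ: "\<And>z. z \<in> P \<Longrightarrow> f z \<in> Q"
    using half_isomorphism_bij[OF h] bij_betwE by blast
  have hom_case: "mQ (f x) (f y) = mQ (f y) (f x)"
    if x: "x \<in> P" and y: "y \<in> P" and comm: "mP x y = mP y x"
      and fu: "f (mP x y) = mQ (f x) (f y)" for x y
  proof (rule ccontr)
    define a b u where "a = f x" and "b = f y" and "u = mP x y"
    assume "mQ (f x) (f y) \<noteq> mQ (f y) (f x)"
    then have ne: "mQ a b \<noteq> mQ b a" unfolding a_def b_def .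
    have ab: "a \<in> Q" "b \<in> Q" unfolding a_def b_def using fQ x y by simp_all
    have u: "u \<in> P" unfolding u_def using loopP x y by (rule loop_mult_closed)
    have uy: "mP u y = mP x (mP y y)" and uu: "mP u u = mP x (mP u y)"
      unfolding u_def using diassociative_commuting_products[OF dP x y comm] by simp_all
    have fuy: "f (mP u y) = mQ (mQ a b) b"
    proof -
      have "f (mP u y) \<in> {mQ (mQ a b) b, mQ b (mQ a b)}"
        using half_isomorphism_mult[OF h u y] fu unfolding a_def b_def u_def by auto
      moreover have "f (mP u y) \<in> {mQ a (mQ b b), mQ (mQ b b) a}"
        using half_isomorphism_mult[OF h x loop_mult_closed[OF loopP y y]]
          half_isomorphism_mult_self[OF h y] uy unfolding a_def b_def by auto
      ultimately show ?thesis
        using diassociative_noncommuting_products(1,2)[OF dQ ab ne] by auto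
    qed
    have "f (mP u u) = mQ (mQ a b) (mQ a b)"
      using half_isomorphism_mult_self[OF h u] fu unfolding a_def b_def u_def by simp
    moreover have "f (mP u u) \<in> {mQ a (mQ (mQ a b) b), mQ (mQ (mQ a b) b) a}"
      using half_isomorphism_mult[OF h x loop_mult_closed[OF loopP u y]] uu fuy
      unfolding a_def by auto
    ultimately show False
      using diassociative_noncommuting_products(3,4)[OF dQ ab ne] by auto
  qed
  from half_isomorphism_mult[OF h assms(4,5)] show ?thesis
  proof
    assume "f (mP x y) = mQ (f x) (f y)"
    then show ?thesis by (rule hom_case[OF assms(4,5) comm])
  next
    assume "f (mP x y) = mQ (f y) (f x)"
    then show ?thesis using hom_case[OF assms(5,4) comm[symmetric]] comm by simp
  qed
qed

lemma half_isomorphism_image_commutant_subset: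
  assumes dP: "diassociative P mP" and dQ: "diassociative Q mQ"
    and h: "half_isomorphism P mP Q mQ f"
  shows "f ` commutant P mP \<subseteq> commutant Q mQ"
proof
  fix d assume "d \<in> f ` commutant P mP"
  then obtain c where c: "c \<in> P" "\<forall>x\<in>P. mP c x = mP x c" and d: "d = f c"
    unfolding commutant_def by blast
  have bij: "bij_betw f P Q" using h by (rule half_isomorphism_bij)
  have "mQ d z = mQ z d" if "z \<in> Q" for z
  proof -
    obtain x where "x \<in> P" "z = f x"
      using \<open>z \<in> Q\<close> bij_betw_imp_surj_on[OF bij] by blast
    then show ?thesis
      using half_isomorphism_commuting_pair[OF dP dQ h c(1)] c(2) d by simp
  qed
  moreover have "d \<in> Q" using bij c(1) d bij_betwE by blast
  ultimately show "d \<in> commutant Q mQ" unfolding commutant_def by blast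
qed

lemma half_isomorphism_commutant_subset_image:
  assumes loopP: "loop P mP" and h: "half_isomorphism P mP Q mQ f"
  shows "commutant Q mQ \<subseteq> f ` commutant P mP"
proof
  fix d assume "d \<in> commutant Q mQ"
  then have "d \<in> Q" and d_comm: "\<forall>z\<in>Q. mQ d z = mQ z d"
    unfolding commutant_def by simp_all
  have bij: "bij_betw f P Q" using h by (rule half_isomorphism_bij)
  obtain c where c: "c \<in> P" "d = f c"
    using \<open>d \<in> Q\<close> bij_betw_imp_surj_on[OF bij] by blast
  have "mP c x = mP x c" if x: "x \<in> P" for x
  proof -
    have "f x \<in> Q" using bij x bij_betwE by blast
    then have "f (mP c x) = f (mP x c)"
      using half_isomorphism_mult[OF h c(1) x] half_isomorphism_mult[OF h x c(1)] d_comm c(2)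
      by auto
    then show ?thesis
      using bij_betw_imp_inj_on[OF bij] loop_mult_closed[OF loopP] c(1) x by (auto dest: inj_onD)
  qed
  then show "d \<in> f ` commutant P mP" using c unfolding commutant_def by blast
qed

theorem lemma2p4:
  fixes P :: "'a set" and mP :: "'a \<Rightarrow> 'a \<Rightarrow> 'a"
    and Q :: "'b set" and mQ :: "'b \<Rightarrow> 'b \<Rightarrow> 'b"
    and f :: "'a \<Rightarrow> 'b"
  assumes "loop P mP" and "loop Q mQ"
    and "diassociative P mP" and "diassociative Q mQ"
    and "half_isomorphism P mP Q mQ f"
  shows "f ` commutant P mP = commutant Q mQ"
  using half_isomorphism_image_commutant_subset[OF assms(3-5)]
    half_isomorphism_commutant_subset_image[OF assms(1,5)]
  by (rule equalityI)

end
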